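(* Assume $|\mathcal X|>2$, $\theta>0$, $u\in(0,1)$, Nakagami-$(p,q)$ fading, and let $\rho^*=\rho^*(\theta,u)$. Let $\mathsf q$ be a corner point of the interference-cloned Q cell $Q_{\mathsf x}(\rho^* )$ (a point of $\partial Q_{\mathsf x}(\rho^* )$ where two boundary arcs, belonging to the distance-ratio circles of two distinct interferers $\mathsf x',\mathsf x''$, meet), and suppose that $\mathsf x',\mathsf x''$ are the only interferers at minimal distance from $\mathsf q$. Then, with only the two nearest interferers taken into account, $\mathbb P\!\left(\frac{h_1r_1^{-\alpha}}{h_2r_2^{-\alpha}+h_3r_3^{-\alpha}}>\theta\right)=u$ at $\mathsf q$; in particular $\mathsf q\in\partial Q^{(2)}_{\mathsf x}$.
   Context: Setting: locally finite $\mathcal X\subset\mathbb{R}^2$, path loss exponent $\alpha>0$, unit powers; Nakagami-$(p,q)$ fading: serving fading $h_1\sim\mathrm{Gamma}(p,\text{rate }p)$, interferer fadings $h_2,h_3,\dots\sim\mathrm{Gamma}(q,\text{rate }q)$, all independent. $H^*=h_1/(h_2+h_3)$ with cdf $F_{H^*}$ and quantile $F_{H^*}^{-1}$; $\rho^*(\theta,u)=(\theta/F_{H^*}^{-1}(1-u))^{1/\alpha}$. Q cell: $Q_{\mathsf x}(\rho)=\{\mathsf y:\min_{\mathsf x'\in\mathcal X\setminus\{\mathsf x\}}\|\mathsf x'-\mathsf y\|>\rho\|\mathsf x-\mathsf y\|\}$; its boundary consists of arcs of the circles $\{\mathsf y:\|\mathsf x'-\mathsf y\|=\rho\|\mathsf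 x-\mathsf y\|\}$. For a location $\mathsf y$ with $\mathsf x$ as nearest point of $\mathcal X$, let $r_1=\|\mathsf x-\mathsf y\|\le r_2\le r_3$ be the three smallest distances from $\mathsf y$ to points of $\mathcal X$. Second-order Q cell: $Q^{(2)}_{\mathsf x}=\{\mathsf y:\ \mathsf x\text{ nearest to }\mathsf y,\ \mathbb P(h_1r_1^{-\alpha}/(h_2r_2^{-\alpha}+h_3r_3^{-\alpha})>\theta)>u\}$. *)

theory Defs
  imports "HOL-Probability.Probability"
begin

type_synonym pt = "real ^ 2"

definition gamma_dens :: "real \<Rightarrow> real \<Rightarrow> real \<Rightarrow> ennreal" where
  "gamma_dens k b x = (if 0 < x then ennreal (b powr k * x powr (k - 1) * exp (- b * x) / Gamma k) else 0)"

text \<open>Law of Nakagami-m power fading: Gamma(m, rate m).\<close>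
definition nak :: "real \<Rightarrow> real measure" where
  "nak m = density lborel (gamma_dens m m)"

definition fad :: "real \<Rightarrow> real \<Rightarrow> (real \<times> real \<times> real) measure" where
  "fad p q = nak p \<Otimes>\<^sub>M (nak q \<Otimes>\<^sub>M nak q)"

definition F_H :: "real \<Rightarrow> real \<Rightarrow> real \<Rightarrow> real" where
  "F_H p q t = measure (fad p q) {(h1, h2, h3). h1 / (h2 + h3) \<le> t}"

definition F_H_inv :: "real \<Rightarrow> real \<Rightarrow> real \<Rightarrow> real" where
  "F_H_inv p q v = Inf {t. v \<le> F_H p q t}"

definition rho_star :: "real \<Rightarrow> real \<Rightarrow> real \<Rightarrow> real \<Rightarrow> real \<Rightarrow> real" where
  "rho_star p q \<alpha> \<theta> u = (\<theta> / F_H_inv p q (1 - u)) powr (1 / \<alpha>)"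

definition succ_prob :: "real \<Rightarrow> real \<Rightarrow> real \<Rightarrow> real \<Rightarrow> real \<Rightarrow> real \<Rightarrow> real \<Rightarrow> real" where
  "succ_prob p q \<alpha> \<theta> r1 r2 r3 = measure (fad p q)
     {(h1, h2, h3). h1 * r1 powr (-\<alpha>) / (h2 * r2 powr (-\<alpha>) + h3 * r3 powr (-\<alpha>)) > \<theta>}"

definition locally_finite :: "pt set \<Rightarrow> bool" where
  "locally_finite X \<longleftrightarrow> (\<forall>R. finite (X \<inter> cball 0 R))"

text \<open>Q cell: the minimum over X - {x} exceeds rho*|x-y| (min exists by local finiteness).\<close>
definition Qcell :: "pt set \<Rightarrow> pt \<Rightarrow> real \<Rightarrow> pt set" where
  "Qcell X x \<rho> = {y. \<forall>x'\<in>X - {x}. dist x' y > \<rho> * dist x y}"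

definition ratio_circle :: "pt \<Rightarrow> pt \<Rightarrow> real \<Rightarrow> pt set" where
  "ratio_circle x x' \<rho> = {y. dist x' y = \<rho> * dist x y}"

definition kdist :: "pt set \<Rightarrow> pt \<Rightarrow> nat \<Rightarrow> real" where
  "kdist X y k = Inf {r. k \<le> card {z\<in>X. dist z y \<le> r}}"

definition Q2cell :: "pt set \<Rightarrow> pt \<Rightarrow> real \<Rightarrow> real \<Rightarrow> real \<Rightarrow> real \<Rightarrow> real \<Rightarrow> pt set" where
  "Q2cell X x p q \<alpha> \<theta> u = {y. (\<forall>z\<in>X. dist x y \<le> dist z y) \<and>
      succ_prob p q \<alpha> \<theta> (dist x y) (kdist X y 2) (kdist X y 3) > u}"

end

theory Submission
  imports Defs
begin

text \<open>
  At the corner c both interferers lie on their distance-ratio circles, so the two interfering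
  distances are r2 = r3 = \<rho>* r1 and the success probability is P(H* > \<theta> (\<rho>*)^(-\<alpha>)) =
  P(H* > F^-1(1 - u)) = 1 - F(F^-1(1 - u)) = u; the last step needs F continuous, which holds
  because H* has no atoms. Every other point y \<noteq> x of the Q cell has all interferers strictly
  beyond \<rho>* r1, and the success probability increases as interferers move away, so it exceeds u
  there: the Q cell without x lies in the second-order Q cell. Since c is in the closure of the
  Q cell but not in the second-order cell, it is a boundary point of the latter.
\<close>

subsection \<open>Nakagami fading\<close>

lemma gamma_dens_measurable [measurable]: "gamma_dens k b \<in> borel_measurable borel"
  unfolding gamma_dens_def by measurable

lemma prob_space_nak:
  assumes m: "0 < m"
  shows "prob_space (nak m)"
proof
  have G: "0 < Gamma m" "Gamma m \<noteq> 0" using Gamma_real_pos[OF m] by simp_all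
  have rescaled: "gamma_dens m m (x / m)
      = ennreal (m / Gamma m) * ennreal (indicator {0..} x * x powr (m - 1) / exp x)" for x
  proof (cases "0 < x")
    case True
    have "m powr m * (x / m) powr (m - 1) * exp (- m * (x / m)) / Gamma m
        = m / Gamma m * (x powr (m - 1) / exp x)"
      using m True by (simp add: powr_divide powr_diff field_simps exp_minus)
    then show ?thesis
      using True m G by (simp add: gamma_dens_def ennreal_mult'[symmetric])
  qed (use m in \<open>auto simp: gamma_dens_def zero_less_divide_iff\<close>)
  have "emeasure (nak m) (space (nak m)) = (\<integral>\<^sup>+x. gamma_dens m m x \<partial>lborel)"
    unfolding nak_def by (simp add: emeasure_density)
  also have "\<dots> = ennreal (1 / m) * (\<integral>\<^sup>+x. gamma_dens m m (x / m) \<partial>lborel)"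
    using m by (subst nn_integral_real_affine[where c = "1 / m" and t = 0]) auto
  also have "\<dots> = ennreal (1 / m) * (ennreal (m / Gamma m) * ennreal (Gamma m))"
    by (simp add: rescaled nn_integral_cmult Gamma_conv_nn_integral_real[OF m])
  also have "\<dots> = 1"
    using m G by (simp add: ennreal_mult'[symmetric])
  finally show "emeasure (nak m) (space (nak m)) = 1" .
qed

lemma sets_nak [simp, measurable_cong]: "sets (nak m) = sets borel"
  unfolding nak_def by simp

lemma space_nak [simp]: "space (nak m) = UNIV"
  unfolding nak_def by simp

lemma sets_fad [simp, measurable_cong]: "sets (fad p q) = sets (borel \<Otimes>\<^sub>M (borel \<Otimes>\<^sub>M borel))"
  unfolding fad_def by (intro sets_pair_measure_cong) simp_all

lemma space_fad [simp]: "space (fad p q) = UNIV"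
  unfolding fad_def by (simp add: space_pair_measure)

lemma prob_space_fad: "0 < p \<Longrightarrow> 0 < q \<Longrightarrow> prob_space (fad p q)"
  unfolding fad_def by (intro prob_space_pair prob_space_nak)

lemma AE_nak_pos_neq:
  assumes "0 < m"
  shows "AE x in nak m. 0 < x \<and> x \<noteq> a"
proof -
  have "AE x in lborel. 0 < gamma_dens m m x \<longrightarrow> 0 < x \<and> x \<noteq> a"
    using AE_lborel_singleton[of a] by eventually_elim (auto simp: gamma_dens_def)
  then show ?thesis
    unfolding nak_def by (subst AE_density) auto
qed

lemma AE_fad:
  assumes p: "0 < p" and q: "0 < q"
  shows "AE h in fad p q. 0 < fst h \<and> 0 < fst (snd h) \<and> 0 < snd (snd h)
    \<and> fst h \<noteq> t * (fst (snd h) + snd (snd h))"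
proof -
  interpret P: prob_space "nak p" by (rule prob_space_nak[OF p])
  interpret Q: prob_space "nak q" by (rule prob_space_nak[OF q])
  interpret QQ: pair_sigma_finite "nak q" "nak q" ..
  interpret PQQ: pair_sigma_finite "nak p" "nak q \<Otimes>\<^sub>M nak q"
    using prob_space_pair[OF Q.prob_space_axioms Q.prob_space_axioms]
    by (simp add: pair_sigma_finite_def P.sigma_finite_measure_axioms prob_space_imp_sigma_finite)
  let ?good = "\<lambda>x y. 0 < x \<and> 0 < fst y \<and> 0 < snd y \<and> x \<noteq> t * (fst y + snd y)"
  have good_sets: "{h \<in> space (nak p \<Otimes>\<^sub>M (nak q \<Otimes>\<^sub>M nak q)). ?good (fst h) (snd h)}
      \<in> sets (nak p \<Otimes>\<^sub>M (nak q \<Otimes>\<^sub>M nak q))"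
    by measurable
  have "AE y in nak q \<Otimes>\<^sub>M nak q. 0 < fst y \<and> 0 < snd y"
  proof (rule QQ.AE_pair_measure)
    show "{y \<in> space (nak q \<Otimes>\<^sub>M nak q). 0 < fst y \<and> 0 < snd y} \<in> sets (nak q \<Otimes>\<^sub>M nak q)"
      by measurable
    show "AE y1 in nak q. AE y2 in nak q. 0 < fst (y1, y2) \<and> 0 < snd (y1, y2)"
      using AE_nak_pos_neq[OF q, of 0]
    proof eventually_elim
      case (elim y1)
      show ?case using AE_nak_pos_neq[OF q, of 0] by eventually_elim (use elim in simp)
    qed
  qed
  then have "AE y in nak q \<Otimes>\<^sub>M nak q. AE x in nak p. ?good x y"
  proof eventually_elim
    case (elim y)
    show ?case using AE_nak_pos_neq[OF p, of "t * (fst y + snd y)"] by eventually_elim (use elim in simp)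
  qed
  then have "AE x in nak p. AE y in nak q \<Otimes>\<^sub>M nak q. ?good x y"
    using PQQ.AE_commute[OF good_sets] by blast
  then have "AE h in nak p \<Otimes>\<^sub>M (nak q \<Otimes>\<^sub>M nak q). ?good (fst h) (snd h)"
    using PQQ.AE_pair_iff[OF good_sets] by blast
  then show ?thesis
    unfolding fad_def .
qed

subsection \<open>The distribution of H*\<close>

definition fading_ratio :: "real \<times> real \<times> real \<Rightarrow> real" where
  "fading_ratio h = fst h / (fst (snd h) + snd (snd h))"

lemma fading_ratio_measurable [measurable]: "fading_ratio \<in> borel_measurable (fad p q)"
  unfolding fading_ratio_def by measurable

lemma sets_vimage_fading_ratio: "A \<in> sets borel \<Longrightarrow> fading_ratio -` A \<in> sets (fad p q)"
  using measurable_sets[OF fading_ratio_measurable, of A p q] by simp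

lemma AE_fading_ratio:
  assumes "0 < p" "0 < q"
  shows "AE h in fad p q. 0 < fading_ratio h \<and> fading_ratio h \<noteq> s"
  using AE_fad[OF assms, of s] by eventually_elim (auto simp: fading_ratio_def field_simps)

lemma F_H_eq_cdf: "F_H p q s = cdf (distr (fad p q) borel fading_ratio) s"
proof -
  have "fading_ratio -` {..s} \<inter> space (fad p q) = {(h1, h2, h3). h1 / (h2 + h3) \<le> s}"
    by (auto simp: fading_ratio_def)
  then show ?thesis
    unfolding cdf_def F_H_def by (subst measure_distr) auto
qed

lemma real_distribution_fading_ratio:
  assumes "0 < p" "0 < q"
  shows "real_distribution (distr (fad p q) borel fading_ratio)"
proof -
  interpret prob_space "fad p q" by (rule prob_space_fad[OF assms])
  show ?thesis
    by (intro real_distribution.intro prob_space_distr) (simp_all add: real_distribution_axioms_def)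
qed

lemma isCont_F_H:
  assumes "0 < p" "0 < q"
  shows "isCont (F_H p q) s"
proof -
  interpret D: real_distribution "distr (fad p q) borel fading_ratio"
    by (rule real_distribution_fading_ratio[OF assms])
  have "measure (fad p q) (fading_ratio -` {s}) = measure (fad p q) {}"
    by (rule measure_eq_AE)
      (use AE_fading_ratio[OF assms, of s] sets_vimage_fading_ratio[of "{s}" p q] in \<open>auto elim: eventually_mono\<close>)
  then have "measure (distr (fad p q) borel fading_ratio) {s} = 0"
    by (subst measure_distr) auto
  then show ?thesis
    unfolding F_H_eq_cdf[abs_def] by (simp add: D.isCont_cdf)
qed

lemma F_H_nonpos:
  assumes "0 < p" "0 < q" "s \<le> 0"
  shows "F_H p q s = 0"
proof -
  have "F_H p q s = measure (fad p q) (fading_ratio -` {..s})"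
    by (simp add: F_H_eq_cdf cdf_def measure_distr)
  also have "\<dots> = measure (fad p q) {}"
    by (rule measure_eq_AE)
      (use AE_fading_ratio[OF assms(1,2), of s] assms(3) sets_vimage_fading_ratio[of "{..s}" p q]
        in \<open>auto elim: eventually_mono\<close>)
  finally show ?thesis by simp
qed

lemma F_H_at_top:
  assumes "0 < p" "0 < q"
  shows "(F_H p q \<longlongrightarrow> 1) at_top"
proof -
  interpret D: real_distribution "distr (fad p q) borel fading_ratio"
    by (rule real_distribution_fading_ratio[OF assms])
  show ?thesis
    unfolding F_H_eq_cdf[abs_def] by (rule D.cdf_lim_at_top_prob)
qed

lemma measure_fading_ratio_greater:
  assumes "0 < p" "0 < q"
  shows "measure (fad p q) {h. s < fading_ratio h} = 1 - F_H p q s"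
proof -
  interpret prob_space "fad p q" by (rule prob_space_fad[OF assms])
  have "{h. s < fading_ratio h} = space (fad p q) - fading_ratio -` {..s}"
    by auto
  then show ?thesis
    using prob_compl[OF sets_vimage_fading_ratio[of "{..s}" p q]]
    by (simp add: F_H_eq_cdf cdf_def measure_distr)
qed

lemma quantile_of_continuous_cdf:
  fixes G :: "real \<Rightarrow> real"
  assumes cont: "\<And>s. isCont G s" and nonpos: "\<And>s. s \<le> 0 \<Longrightarrow> G s = 0"
    and lim: "(G \<longlongrightarrow> 1) at_top" and v: "0 < v" "v < 1"
  defines "t \<equiv> Inf {s. v \<le> G s}"
  shows "0 < t" "G t = v" "\<And>s. s < t \<Longrightarrow> G s < v"
proof -
  let ?S = "{s. v \<le> G s}"
  have "\<forall>\<^sub>F s in at_top. v < G s"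
    using lim v by (intro order_tendstoD) auto
  then obtain s0 where "v < G s0"
    by (auto dest: eventually_happens)
  then have ne: "?S \<noteq> {}" by (auto intro: less_imp_le)
  have pos: "0 < s" if "s \<in> ?S" for s
    using that nonpos v by (cases "s \<le> 0") auto
  then have bdd: "bdd_below ?S"
    by (meson bdd_belowI less_imp_le)
  have "closed ?S"
    using cont by (intro closed_Collect_le continuous_intros) (simp add: continuous_at_imp_continuous_on)
  then have tS: "t \<in> ?S"
    unfolding t_def using ne bdd by (rule closed_contains_Inf[rotated 2])
  then show "0 < t" by (rule pos)
  show below: "G s < v" if "s < t" for s
    using cInf_lower[OF _ bdd, of s] that unfolding t_def by force
  have "(G \<longlongrightarrow> G t) (at_left t)"
    using cont[of t] by (simp add: isCont_def filterlim_at_split)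
  moreover have "\<forall>\<^sub>F s in at_left t. G s \<le> v"
    by (rule eventually_at_leftI[of "t - 1"]) (auto intro: less_imp_le below)
  ultimately have "G t \<le> v"
    by (rule tendsto_upperbound) (rule trivial_limit_at_left_real)
  with tS show "G t = v" by simp
qed

lemma F_H_quantile:
  assumes pq: "0 < p" "0 < q" and u: "0 < u" "u < 1"
  shows "0 < F_H_inv p q (1 - u)" "F_H p q (F_H_inv p q (1 - u)) = 1 - u"
    "\<And>s. s < F_H_inv p q (1 - u) \<Longrightarrow> F_H p q s < 1 - u"
  using quantile_of_continuous_cdf[of "F_H p q" "1 - u", OF isCont_F_H[OF pq] F_H_nonpos[OF pq] F_H_at_top[OF pq]] u
  unfolding F_H_inv_def by auto

subsection \<open>Success probability\<close>

lemma sets_succ_event: "{(h1, h2, h3). \<theta> < h1 * a / (h2 * b + h3 * c)} \<in> sets (fad p q)"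
proof -
  have "(\<lambda>h. fst h * a / (fst (snd h) * b + snd (snd h) * c)) \<in> borel_measurable (fad p q)"
    by measurable
  from measurable_sets[OF this, of "{\<theta><..}"] show ?thesis
    by (simp add: vimage_def split_def)
qed

lemma succ_prob_equal_distances:
  assumes r1: "0 < r1" and r2: "0 < r2"
  shows "succ_prob p q \<alpha> \<theta> r1 r2 r2 = measure (fad p q) {h. \<theta> * (r1 / r2) powr \<alpha> < fading_ratio h}"
proof -
  let ?c = "(r1 / r2) powr \<alpha>"
  have "r1 powr (-\<alpha>) = r2 powr (-\<alpha>) / ?c"
    using r1 r2 by (simp add: powr_divide powr_minus_divide)
  then have "h1 * r1 powr (-\<alpha>) / (h2 * r2 powr (-\<alpha>) + h3 * r2 powr (-\<alpha>)) = fading_ratio (h1, h2, h3) / ?c"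
    for h1 h2 h3
    using r2 by (simp add: fading_ratio_def distrib_right[symmetric])
  moreover have "0 < ?c" using r1 r2 by simp
  ultimately have "{(h1, h2, h3). \<theta> < h1 * r1 powr (-\<alpha>) / (h2 * r2 powr (-\<alpha>) + h3 * r2 powr (-\<alpha>))}
      = {h. \<theta> * ?c < fading_ratio h}"
    by (auto simp: pos_less_divide_eq)
  then show ?thesis
    unfolding succ_prob_def by simp
qed

lemma succ_prob_mono:
  assumes pq: "0 < p" "0 < q" and \<alpha>: "0 \<le> \<alpha>"
    and r2: "0 < r2" "r2 \<le> r2'" and r3: "0 < r3" "r3 \<le> r3'"
  shows "succ_prob p q \<alpha> \<theta> r1 r2 r3 \<le> succ_prob p q \<alpha> \<theta> r1 r2' r3'"
proof -
  interpret prob_space "fad p q" by (rule prob_space_fad[OF pq])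
  let ?success = "\<lambda>r2 r3. {(h1, h2, h3). \<theta> < h1 * r1 powr (-\<alpha>) / (h2 * r2 powr (-\<alpha>) + h3 * r3 powr (-\<alpha>))}"
  have "AE h in fad p q. h \<in> ?success r2 r3 \<longrightarrow> h \<in> ?success r2' r3'"
    using AE_fad[OF pq, of 0]
  proof eventually_elim
    case (elim h)
    obtain h1 h2 h3 where h: "h = (h1, h2, h3)" by (cases h)
    have pos: "0 < h1" "0 < h2" "0 < h3" using elim by (simp_all add: h)
    have "h2 * r2' powr (-\<alpha>) + h3 * r3' powr (-\<alpha>) \<le> h2 * r2 powr (-\<alpha>) + h3 * r3 powr (-\<alpha>)"
      using pos r2 r3 \<alpha> by (intro add_mono mult_left_mono powr_mono2') auto
    moreover have "0 < h2 * r2' powr (-\<alpha>) + h3 * r3' powr (-\<alpha>)"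
      using pos r2 r3 by (intro add_pos_pos mult_pos_pos) auto
    ultimately have "h1 * r1 powr (-\<alpha>) / (h2 * r2 powr (-\<alpha>) + h3 * r3 powr (-\<alpha>))
        \<le> h1 * r1 powr (-\<alpha>) / (h2 * r2' powr (-\<alpha>) + h3 * r3' powr (-\<alpha>))"
      using pos by (intro divide_left_mono) auto
    then show ?case by (auto simp: h)
  qed
  then show ?thesis
    unfolding succ_prob_def by (rule finite_measure_mono_AE) (rule sets_succ_event)
qed

lemma rho_star_pos_powr:
  assumes pq: "0 < p" "0 < q" and \<alpha>: "0 < \<alpha>" and \<theta>: "0 < \<theta>" and u: "0 < u" "u < 1"
  shows "0 < rho_star p q \<alpha> \<theta> u" "rho_star p q \<alpha> \<theta> u powr \<alpha> = \<theta> / F_H_inv p q (1 - u)"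
  using F_H_quantile(1)[OF pq u] \<alpha> \<theta> by (simp_all add: rho_star_def powr_powr)

lemma succ_prob_on_ratio_circle:
  assumes pq: "0 < p" "0 < q" and \<alpha>: "0 < \<alpha>" and \<theta>: "0 < \<theta>" and u: "0 < u" "u < 1"
    and r: "0 < r"
  shows "succ_prob p q \<alpha> \<theta> r (rho_star p q \<alpha> \<theta> u * r) (rho_star p q \<alpha> \<theta> u * r) = u"
proof -
  let ?t = "F_H_inv p q (1 - u)" and ?\<rho> = "rho_star p q \<alpha> \<theta> u"
  have t: "0 < ?t" "F_H p q ?t = 1 - u" using F_H_quantile[OF pq u] by simp_all
  note \<rho> = rho_star_pos_powr[OF pq \<alpha> \<theta> u]
  have "\<theta> * (r / (?\<rho> * r)) powr \<alpha> = ?t"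
    using r \<rho> \<theta> t(1) by (simp add: powr_divide)
  then show ?thesis
    using succ_prob_equal_distances[OF r mult_pos_pos[OF \<rho>(1) r]] measure_fading_ratio_greater[OF pq] t(2)
    by simp
qed

lemma succ_prob_gt_beyond_ratio_circle:
  assumes pq: "0 < p" "0 < q" and \<alpha>: "0 < \<alpha>" and \<theta>: "0 < \<theta>" and u: "0 < u" "u < 1"
    and r: "0 < r" and m: "rho_star p q \<alpha> \<theta> u * r < m" and r2: "m \<le> r2" and r3: "m \<le> r3"
  shows "u < succ_prob p q \<alpha> \<theta> r r2 r3"
proof -
  let ?t = "F_H_inv p q (1 - u)" and ?\<rho> = "rho_star p q \<alpha> \<theta> u"
  note \<rho> = rho_star_pos_powr[OF pq \<alpha> \<theta> u]
  have m_pos: "0 < m" using m mult_pos_pos[OF \<rho>(1) r] by linarith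
  have "(r / m) powr \<alpha> < (1 / ?\<rho>) powr \<alpha>"
    using m m_pos r \<rho>(1) \<alpha> by (intro powr_less_mono2) (auto simp: field_simps)
  also have "\<dots> = ?t / \<theta>" using \<rho> by (simp add: powr_divide)
  finally have "\<theta> * (r / m) powr \<alpha> < ?t" using \<theta> by (simp add: field_simps)
  then have "u < measure (fad p q) {h. \<theta> * (r / m) powr \<alpha> < fading_ratio h}"
    using F_H_quantile(3)[OF pq u] measure_fading_ratio_greater[OF pq] by force
  also have "\<dots> = succ_prob p q \<alpha> \<theta> r m m"
    by (rule succ_prob_equal_distances[OF r m_pos, symmetric])
  also have "\<dots> \<le> succ_prob p q \<alpha> \<theta> r r2 r3"
    using r2 r3 m_pos \<alpha> by (intro succ_prob_mono[OF pq]) auto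
  finally show ?thesis .
qed

subsection \<open>Nearest points and k-th distances\<close>

lemma locally_finite_finite_within:
  assumes "locally_finite X"
  shows "finite {z \<in> X. dist z y \<le> r}"
proof (rule finite_subset)
  show "{z \<in> X. dist z y \<le> r} \<subseteq> X \<inter> cball 0 (norm y + r)"
  proof
    fix z assume "z \<in> {z \<in> X. dist z y \<le> r}"
    then show "z \<in> X \<inter> cball 0 (norm y + r)"
      using norm_triangle_sub[of z y] by (simp add: dist_norm)
  qed
  show "finite (X \<inter> cball 0 (norm y + r))"
    using assms unfolding locally_finite_def ..
qed

lemma locally_finite_nearest:
  assumes "locally_finite X" "A \<subseteq> X" "a \<in> A"
  obtains z where "z \<in> A" "\<And>w. w \<in> A \<Longrightarrow> dist z y \<le> dist w y"
proof -
  let ?B = "{w \<in> A. dist w y \<le> dist a y}"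
  have "finite ?B"
    using locally_finite_finite_within[OF assms(1), of y "dist a y"]
    by (rule finite_subset[rotated]) (use assms(2) in auto)
  moreover have "?B \<noteq> {}" using assms(3) by auto
  ultimately have "arg_min_on (\<lambda>w. dist w y) ?B \<in> ?B"
    "\<not> (\<exists>w\<in>?B. dist w y < dist (arg_min_on (\<lambda>w. dist w y) ?B) y)"
    by (rule arg_min_if_finite)+
  then obtain z where z: "z \<in> ?B" "\<And>w. w \<in> ?B \<Longrightarrow> dist z y \<le> dist w y"
    using not_less by blast
  show thesis
  proof
    show "z \<in> A" using z(1) by simp
    show "dist z y \<le> dist w y" if "w \<in> A" for w
      using z that by (cases "dist w y \<le> dist a y") auto
  qed
qed

lemma kdist_le:
  assumes "1 \<le> k" "k \<le> card {z \<in> X. dist z y \<le> r}"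
  shows "kdist X y k \<le> r"
  unfolding kdist_def
proof (rule cInf_lower)
  show "r \<in> {r. k \<le> card {z \<in> X. dist z y \<le> r}}" using assms(2) by simp
  show "bdd_below {r. k \<le> card {z \<in> X. dist z y \<le> r}}"
  proof (rule bdd_belowI)
    fix s assume "s \<in> {r. k \<le> card {z \<in> X. dist z y \<le> r}}"
    then have "card {z \<in> X. dist z y \<le> s} \<noteq> 0" using assms(1) by simp
    then have "{z \<in> X. dist z y \<le> s} \<noteq> {}" by (metis card.empty)
    then show "0 \<le> s" by (auto intro: order_trans[OF zero_le_dist])
  qed
qed

lemma kdist_ge:
  assumes lf: "locally_finite X" and k: "2 \<le> k" and x: "x \<in> X"
    and far: "\<And>z. z \<in> X - {x} \<Longrightarrow> m \<le> dist z y"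
    and F: "F \<subseteq> X" "finite F" "k \<le> card F"
  shows "m \<le> kdist X y k"
  unfolding kdist_def
proof (rule cInf_greatest)
  have "F \<noteq> {}" using F(3) k by auto
  then have "F \<subseteq> {z \<in> X. dist z y \<le> Max ((\<lambda>z. dist z y) ` F)}"
    using F(1,2) by auto
  then have "card F \<le> card {z \<in> X. dist z y \<le> Max ((\<lambda>z. dist z y) ` F)}"
    by (rule card_mono[OF locally_finite_finite_within[OF lf]])
  then have "Max ((\<lambda>z. dist z y) ` F) \<in> {r. k \<le> card {z \<in> X. dist z y \<le> r}}"
    using F(3) by simp
  then show "{r. k \<le> card {z \<in> X. dist z y \<le> r}} \<noteq> {}" by blast
  fix r assume r: "r \<in> {r. k \<le> card {z \<in> X. dist z y \<le> r}}"
  show "m \<le> r"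
  proof (rule ccontr)
    assume "\<not> m \<le> r"
    then have "{z \<in> X. dist z y \<le> r} \<subseteq> {x}" using far by force
    then have "card {z \<in> X. dist z y \<le> r} \<le> 1" using card_mono[of "{x}"] by simp
    with r k show False by simp
  qed
qed

lemma kdist_eq:
  assumes lf: "locally_finite X" and k: "2 \<le> k" and x: "x \<in> X"
    and far: "\<And>z. z \<in> X - {x} \<Longrightarrow> R \<le> dist z y"
    and F: "F \<subseteq> X" "finite F" "k \<le> card F" and near: "\<And>z. z \<in> F \<Longrightarrow> dist z y \<le> R"
  shows "kdist X y k = R"
proof (rule antisym)
  have "card F \<le> card {z \<in> X. dist z y \<le> R}"
    using F near by (intro card_mono[OF locally_finite_finite_within[OF lf]]) auto
  then show "kdist X y k \<le> R" using k F(3) by (intro kdist_le) auto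
  show "R \<le> kdist X y k" by (rule kdist_ge[OF lf k x far F])
qed

lemma closure_Diff_singleton:
  fixes c x :: "'a :: t1_space"
  assumes "c \<in> closure S" "c \<noteq> x"
  shows "c \<in> closure (S - {x})"
proof -
  have "closure S \<subseteq> insert x (closure (S - {x}))"
    by (metis closure_insert closure_mono insert_Diff_single subset_insertI)
  then show ?thesis using assms by blast
qed

lemma obtain_three_point_subset:
  assumes "infinite X \<or> 2 < card X"
  obtains F where "F \<subseteq> X" "finite F" "card F = 3"
proof (cases "finite X")
  case True
  with assms have "3 \<le> card X" by simp
  then obtain F where "F \<subseteq> X" "card F = 3" "finite F" by (rule obtain_subset_with_card_n)
  then show ?thesis by (intro that)
next
  case False
  then obtain F where "finite F" "card F = 3" "F \<subseteq> X"
    using infinite_arbitrarily_large by blast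
  then show ?thesis by (intro that)
qed

lemma Qcell_subset_Q2cell:
  assumes lf: "locally_finite X" and card: "infinite X \<or> 2 < card X" and x: "x \<in> X"
    and pq: "0 < p" "0 < q" and \<alpha>: "0 < \<alpha>" and \<theta>: "0 < \<theta>" and u: "0 < u" "u < 1"
    and \<rho>: "1 \<le> rho_star p q \<alpha> \<theta> u"
  shows "Qcell X x (rho_star p q \<alpha> \<theta> u) - {x} \<subseteq> Q2cell X x p q \<alpha> \<theta> u"
proof
  let ?\<rho> = "rho_star p q \<alpha> \<theta> u"
  fix y assume y: "y \<in> Qcell X x ?\<rho> - {x}"
  then have r: "0 < dist x y" by auto
  have Q: "?\<rho> * dist x y < dist z y" if "z \<in> X - {x}" for z
    using y that unfolding Qcell_def by simp
  \<comment> \<open>Without three points of X, kdist X y 3 would be the junk value Inf {}.\<close>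
  obtain F where F: "F \<subseteq> X" "finite F" "card F = 3"
    using card by (rule obtain_three_point_subset)
  have "F - {x} \<noteq> {}"
  proof
    assume "F - {x} = {}"
    then have "card F \<le> card {x}" using F(2) by (intro card_mono) auto
    with F(3) show False by simp
  qed
  then obtain z where z: "z \<in> X - {x}" "\<And>w. w \<in> X - {x} \<Longrightarrow> dist z y \<le> dist w y"
    using locally_finite_nearest[OF lf, of "X - {x}"] F(1) by blast
  have nearest: "dist x y \<le> dist w y" if "w \<in> X" for w
  proof (cases "w = x")
    case False
    have "dist x y \<le> ?\<rho> * dist x y" using \<rho> r by simp
    also have "\<dots> < dist w y" using Q False that by simp
    finally show ?thesis by simp
  qed simp
  have "dist z y \<le> kdist X y 2" "dist z y \<le> kdist X y 3"
    using F(3) by (intro kdist_ge[OF lf _ x z(2) F(1,2)]; simp)+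
  then have "u < succ_prob p q \<alpha> \<theta> (dist x y) (kdist X y 2) (kdist X y 3)"
    using Q[OF z(1)] by (intro succ_prob_gt_beyond_ratio_circle[OF pq \<alpha> \<theta> u r])
  then show "y \<in> Q2cell X x p q \<alpha> \<theta> u"
    using nearest unfolding Q2cell_def by simp
qed

theorem lemma6:
  fixes X :: "pt set" and x x' x'' c :: pt and \<alpha> \<theta> u p q :: real
  assumes lf: "locally_finite X"
    and card: "infinite X \<or> card X > 2"
    and alpha: "\<alpha> > 0" and theta: "\<theta> > 0" and u: "0 < u" "u < 1"
    and pq: "p > 0" "q > 0"
    and xX: "x \<in> X"
    and x'X: "x' \<in> X - {x}" and x''X: "x'' \<in> X - {x}" and dist': "x' \<noteq> x''"
    and corner: "c \<in> frontier (Qcell X x (rho_star p q \<alpha> \<theta> u))"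
    and on': "c \<in> ratio_circle x x' (rho_star p q \<alpha> \<theta> u)"
    and on'': "c \<in> ratio_circle x x'' (rho_star p q \<alpha> \<theta> u)"
    and arc': "c \<in> closure (frontier (Qcell X x (rho_star p q \<alpha> \<theta> u))
                  \<inter> ratio_circle x x' (rho_star p q \<alpha> \<theta> u)
                  - ratio_circle x x'' (rho_star p q \<alpha> \<theta> u))"
    and arc'': "c \<in> closure (frontier (Qcell X x (rho_star p q \<alpha> \<theta> u))
                  \<inter> ratio_circle x x'' (rho_star p q \<alpha> \<theta> u)
                  - ratio_circle x x' (rho_star p q \<alpha> \<theta> u))"
    and minimal: "\<forall>z\<in>X - {x}. dist x' c \<le> dist z c \<and> dist x'' c \<le> dist z c"
    and only: "\<forall>z\<in>X - {x, x', x''}. dist x' c < dist z c"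
    and nearest: "\<forall>z\<in>X. dist x c \<le> dist z c"
  shows "succ_prob p q \<alpha> \<theta> (dist x c) (kdist X c 2) (kdist X c 3) = u
         \<and> c \<in> frontier (Q2cell X x p q \<alpha> \<theta> u)"
proof -
  \<comment> \<open>Of the corner hypotheses only c \<in> closure (Qcell ...) and c on both circles are needed.\<close>
  define \<rho> where "\<rho> = rho_star p q \<alpha> \<theta> u"
  have on_circles: "dist x' c = \<rho> * dist x c" "dist x'' c = \<rho> * dist x c"
    using on' on'' by (simp_all add: ratio_circle_def \<rho>_def)
  have "c \<noteq> x"
    using on_circles(1) x'X by auto
  then have r: "0 < dist x c" by simp
  have x_near: "dist x c \<le> \<rho> * dist x c"
    using nearest x'X on_circles(1) by auto
  then have "1 \<le> \<rho>" using r by simp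
  have far: "\<rho> * dist x c \<le> dist z c" if "z \<in> X - {x}" for z
    using minimal that on_circles by auto
  have near: "dist z c \<le> \<rho> * dist x c" if "z \<in> {x, x', x''}" for z
    using that on_circles x_near by auto
  have three: "{x, x', x''} \<subseteq> X" "finite {x, x', x''}" "card {x, x', x''} = 3"
    using xX x'X x''X dist' by auto
  have "kdist X c 2 = \<rho> * dist x c" "kdist X c 3 = \<rho> * dist x c"
    using three(3) by (intro kdist_eq[OF lf _ xX far three(1,2) _ near]; simp)+
  then have succ: "succ_prob p q \<alpha> \<theta> (dist x c) (kdist X c 2) (kdist X c 3) = u"
    using succ_prob_on_ratio_circle[OF pq alpha theta u r] by (simp add: \<rho>_def)
  have "c \<in> closure (Qcell X x \<rho> - {x})"
    using corner \<open>c \<noteq> x\<close> unfolding frontier_def \<rho>_def by (blast intro: closure_Diff_singleton)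
  then have "c \<in> closure (Q2cell X x p q \<alpha> \<theta> u)"
    using closure_mono[OF Qcell_subset_Q2cell[OF lf card xX pq alpha theta u]] \<open>1 \<le> \<rho>\<close>
    unfolding \<rho>_def by blast
  moreover have "c \<notin> Q2cell X x p q \<alpha> \<theta> u"
    using succ unfolding Q2cell_def by simp
  ultimately show ?thesis
    using succ interior_subset unfolding frontier_def by blast
qed

end
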